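(* Let $n$ be an even positive integer that is not a power of $2$. Let $V=\{v\in\{-1,1\}^n : v_1=1\}$, $P(V)=\{\sum_{v\in W}v : W\subseteq V\}$, $g(V)=\frac12\sum_{v\in V}v$, $\mathbf{1}=(1,\dots,1)\in\mathbb{R}^n$, $M=2^{n-2}-\frac12\binom{n-1}{n/2}$, and $K_M=\{(x_1,\dots,x_n)\in\mathbb{R}^n : x_i\le M\ \forall i\}$. Then \[0\in P(V)-g(V)-\tfrac12\binom{n-1}{n/2}\mathbf{1}\subset K_M.\] *)

theory Defs
  imports Complex_Main
begin

text \<open>Vectors in R^n are represented as functions nat \<Rightarrow> real indexed by {1..n},
  extensional (zero outside {1..n}).\<close>

definition Vset :: "nat \<Rightarrow> (nat \<Rightarrow> real) set" where
  "Vset n = {v. (\<forall>i\<in>{1..n}. v i = -1 \<or> v i = 1) \<and> (\<forall>i. i \<notin> {1..n} \<longrightarrow> v i = 0) \<and> v 1 = 1}"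

definition PV :: "nat \<Rightarrow> (nat \<Rightarrow> real) set" where
  "PV n = {(\<lambda>i. \<Sum>v\<in>W. v i) | W. W \<subseteq> Vset n}"

definition gV :: "nat \<Rightarrow> (nat \<Rightarrow> real)" where
  "gV n = (\<lambda>i. (1/2) * (\<Sum>v\<in>Vset n. v i))"

definition ones :: "nat \<Rightarrow> (nat \<Rightarrow> real)" where
  "ones n = (\<lambda>i. if i \<in> {1..n} then 1 else 0)"

definition KM :: "nat \<Rightarrow> real \<Rightarrow> (nat \<Rightarrow> real) set" where
  "KM n M = {x. \<forall>i\<in>{1..n}. x i \<le> M}"

end

theory Submission
  imports Defs "HOL-Computational_Algebra.Primes" "HOL-Library.Disjoint_Sets"
begin

(* Identify v in {-1,1}^n with the set A of its +1 coordinates, v = sign_vec n A.  A subset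
   W of V is encoded by a sign function F on subsets of {1..n} that is odd under complement:
   W consists of the sign vectors of the sets A containing 1 with F A = 1.  Then 0 lies in
   P(V) - g(V) - c 1 as soon as the moments sum_A F(A) sign_vec n A i all equal
   2c = binom(n-1, n/2).  The majority sign does this off the middle layer |A| = n/2, so it
   remains to find an odd sign function on the middle layer with vanishing moments.  Here the
   odd divisor m > 1 of n enters: group the coordinates into residue classes mod m.  If every
   class is balanced, take the product of m coordinates from distinct classes; it is odd
   since m is odd, and flipping a class that avoids i pairs off the i-th moment.  Otherwise
   take the sign of the sum, over the m rotations of the vector of class imbalances, of its
   first nonzero entry: this sum of m signs is odd, hence nonzero, and is invariant under the
   cyclic shift of coordinates, so the i-th moment does not depend on i, while the moments
   add up to 0.  The inclusion in K_M holds because coordinate i of a partial sum of V is at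
   most the number of v in V with v i = 1. *)

lemma sum_subset_le_half_sum_plus_card:
  fixes f :: "'a \<Rightarrow> real"
  assumes "finite V" "W \<subseteq> V" "\<And>v. v \<in> V \<Longrightarrow> \<bar>f v\<bar> \<le> 1"
  shows "sum f W \<le> (sum f V + card V) / 2"
proof -
  have "sum f W \<le> (\<Sum>v\<in>W. (f v + 1) / 2)"
    using assms by (intro sum_mono) force
  also have "\<dots> \<le> (\<Sum>v\<in>V. (f v + 1) / 2)"
    using assms by (intro sum_mono2) force+
  also have "\<dots> = (sum f V + card V) / 2"
    by (simp add: sum.distrib flip: sum_divide_distrib)
  finally show ?thesis .
qed

lemma card_subsets_containing_gt:
  assumes "finite S" "i \<in> S"
  shows "card {A. A \<subseteq> S \<and> i \<in> A \<and> t < card A}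
           = card {A. A \<subseteq> S \<and> i \<notin> A \<and> t < card A} + ((card S - 1) choose t)"
proof -
  let ?ge = "{B. B \<subseteq> S - {i} \<and> t \<le> card B}"
  let ?gt = "{B. B \<subseteq> S - {i} \<and> t < card B}"
  let ?eq = "{B. B \<subseteq> S - {i} \<and> card B = t}"
  have "card (insert i B) = Suc (card B)" if "B \<subseteq> S - {i}" for B
    using assms(1) that by (meson card_insert_disjoint finite_Diff finite_subset subset_Diff_insert)
  then have "bij_betw (insert i) ?ge {A. A \<subseteq> S \<and> i \<in> A \<and> t < card A}"
    by (intro bij_betw_byWitness[where f' = "\<lambda>A. A - {i}"])
       (use assms in \<open>auto simp: subset_insert_iff\<close>)
  then have "card {A. A \<subseteq> S \<and> i \<in> A \<and> t < card A} = card ?ge"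
    by (simp add: bij_betw_same_card)
  also have "?ge = ?gt \<union> ?eq" by auto
  also have "card (?gt \<union> ?eq) = card ?gt + card ?eq"
    by (rule card_Un_disjoint) (use assms(1) in auto)
  also have "?gt = {A. A \<subseteq> S \<and> i \<notin> A \<and> t < card A}" by auto
  also have "card ?eq = (card S - 1) choose t"
    using assms by (simp add: n_subsets)
  finally show ?thesis .
qed

lemma exists_odd_divisor_if_not_power_of_2:
  fixes n :: nat
  assumes "0 < n" and "\<not> (\<exists>k. n = 2 ^ k)"
  obtains m where "odd m" "1 < m" "m dvd n"
proof -
  obtain m where m: "n = 2 ^ multiplicity (2::nat) n * m" "odd m"
    by (rule multiplicity_decompose'[of n 2]) (use assms(1) in auto)
  moreover have "m \<noteq> 1" using m(1) assms(2) by auto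
  ultimately show ?thesis
    using that odd_pos[of m] by (metis dvd_triv_right less_one nat_neq_iff)
qed

lemma card_le_of_subset_atLeastAtMost: "A \<subseteq> {1..n} \<Longrightarrow> card A \<le> n"
  using card_mono[of "{1..n}" A] by simp

lemma card_Diff_atLeastAtMost: "A \<subseteq> {1..n} \<Longrightarrow> card ({1..n} - A) = n - card A"
  by (simp add: card_Diff_subset finite_subset)

lemma lower_half_eq_image_Diff:
  "{A. A \<subseteq> {1..n} \<and> 2 * card A < n} = (\<lambda>A. {1..n} - A) ` {A. A \<subseteq> {1..n} \<and> n < 2 * card A}"
proof (intro set_eqI iffI)
  fix A assume "A \<in> {A. A \<subseteq> {1..n} \<and> 2 * card A < n}"
  then have "A \<subseteq> {1..n}" "2 * card A < n" by simp_all
  then have "{1..n} - A \<in> {A. A \<subseteq> {1..n} \<and> n < 2 * card A}" "A = {1..n} - ({1..n} - A)"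
    using card_Diff_atLeastAtMost[of A n] by auto
  then show "A \<in> (\<lambda>A. {1..n} - A) ` {A. A \<subseteq> {1..n} \<and> n < 2 * card A}" by blast
next
  fix A assume "A \<in> (\<lambda>A. {1..n} - A) ` {A. A \<subseteq> {1..n} \<and> n < 2 * card A}"
  then obtain B where "B \<subseteq> {1..n}" "n < 2 * card B" "A = {1..n} - B"
    by auto
  then show "A \<in> {A. A \<subseteq> {1..n} \<and> 2 * card A < n}"
    using card_Diff_atLeastAtMost[of B n] card_le_of_subset_atLeastAtMost[of B n]
    by (simp add: diff_mult_distrib2)
qed

section \<open>Sign vectors of subsets\<close>

definition sign_vec :: "nat \<Rightarrow> nat set \<Rightarrow> nat \<Rightarrow> real" where
  "sign_vec n A i = (if i \<in> {1..n} then if i \<in> A then 1 else -1 else 0)"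

lemma sign_vec_Diff: "i \<in> {1..n} \<Longrightarrow> sign_vec n ({1..n} - A) i = - sign_vec n A i"
  by (simp add: sign_vec_def)

lemma abs_sign_vec: "i \<in> {1..n} \<Longrightarrow> \<bar>sign_vec n A i\<bar> = 1"
  by (simp add: sign_vec_def)

lemma inj_on_sign_vec: "inj_on (sign_vec n) (Pow {1..n})"
proof (rule inj_onI)
  fix A B assume A: "A \<in> Pow {1..n}" and B: "B \<in> Pow {1..n}" and eq: "sign_vec n A = sign_vec n B"
  have "i \<in> A \<longleftrightarrow> i \<in> B" for i
  proof (cases "i \<in> {1..n}")
    case True
    then show ?thesis using fun_cong[OF eq, of i] by (simp add: sign_vec_def split: if_splits)
  next
    case False
    then show ?thesis using A B by auto
  qed
  then show "A = B" by blast
qed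

lemma sum_sign_vec_atLeastAtMost:
  assumes "A \<subseteq> {1..n}"
  shows "(\<Sum>i\<in>{1..n}. sign_vec n A i) = 2 * real (card A) - real n"
proof -
  have "(\<Sum>i\<in>{1..n}. sign_vec n A i) = (\<Sum>i\<in>{1..n}. if i \<in> A then 1 else -1)"
    by (rule sum.cong) (auto simp: sign_vec_def)
  also have "\<dots> = real (card A) - real (card ({1..n} - A))"
    using assms by (simp add: sum.If_cases Int_absorb1 Diff_eq)
  also have "card ({1..n} - A) = n - card A"
    using assms by (rule card_Diff_atLeastAtMost)
  finally show ?thesis
    using card_le_of_subset_atLeastAtMost[OF assms] by simp
qed

lemma sum_sign_vec_card_gt:
  assumes "i \<in> {1..n}"
  shows "(\<Sum>A\<in>{A. A \<subseteq> {1..n} \<and> t < card A}. sign_vec n A i) = real ((n - 1) choose t)"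
proof -
  let ?G = "{A. A \<subseteq> {1..n} \<and> t < card A}"
  have "(\<Sum>A\<in>?G. sign_vec n A i) = (\<Sum>A\<in>?G. if i \<in> A then 1 else -1)"
    using assms by (intro sum.cong) (auto simp: sign_vec_def)
  also have "\<dots> = real (card (?G \<inter> {A. i \<in> A})) - real (card (?G \<inter> - {A. i \<in> A}))"
    by (simp add: sum.If_cases)
  also have "?G \<inter> {A. i \<in> A} = {A. A \<subseteq> {1..n} \<and> i \<in> A \<and> t < card A}" by auto
  also have "?G \<inter> - {A. i \<in> A} = {A. A \<subseteq> {1..n} \<and> i \<notin> A \<and> t < card A}" by auto
  finally show ?thesis
    using card_subsets_containing_gt[OF finite_atLeastAtMost assms, of t] by simp
qed

lemma Vset_eq_image_sign_vec:
  assumes "0 < n"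
  shows "Vset n = sign_vec n ` {A. A \<subseteq> {1..n} \<and> 1 \<in> A}"
proof
  show "sign_vec n ` {A. A \<subseteq> {1..n} \<and> 1 \<in> A} \<subseteq> Vset n"
    using assms by (auto simp: Vset_def sign_vec_def)
next
  show "Vset n \<subseteq> sign_vec n ` {A. A \<subseteq> {1..n} \<and> 1 \<in> A}"
  proof
    fix v assume v: "v \<in> Vset n"
    then have "v = sign_vec n {i \<in> {1..n}. v i = 1}"
      by (auto simp: Vset_def sign_vec_def fun_eq_iff)
    moreover have "{i \<in> {1..n}. v i = 1} \<in> {A. A \<subseteq> {1..n} \<and> 1 \<in> A}"
      using v assms by (auto simp: Vset_def)
    ultimately show "v \<in> sign_vec n ` {A. A \<subseteq> {1..n} \<and> 1 \<in> A}" by blast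
  qed
qed

lemma card_Vset:
  assumes "0 < n"
  shows "card (Vset n) = 2 ^ (n - 1)"
proof -
  have "bij_betw (insert 1) (Pow {2..n}) {A. A \<subseteq> {1..n} \<and> 1 \<in> A}"
    by (rule bij_betw_byWitness[where f' = "\<lambda>A. A - {1}"]) (use assms in auto)
  then have "card {A. A \<subseteq> {1..n} \<and> 1 \<in> A} = 2 ^ (n - 1)"
    by (simp add: bij_betw_same_card [symmetric] card_Pow)
  moreover have "inj_on (sign_vec n) {A. A \<subseteq> {1..n} \<and> 1 \<in> A}"
    by (rule inj_on_subset [OF inj_on_sign_vec]) auto
  ultimately show ?thesis
    by (simp add: Vset_eq_image_sign_vec [OF assms] card_image)
qed

lemma sum_Vset_subset_le:
  assumes "0 < n" and "W \<subseteq> Vset n"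
  shows "(\<Sum>v\<in>W. v i) \<le> gV n i + 2 ^ (n - 1) / 2"
proof -
  have "finite (Vset n)"
    using assms(1) by (simp add: Vset_eq_image_sign_vec)
  moreover have "\<bar>v i\<bar> \<le> 1" if "v \<in> Vset n" for v
  proof (cases "i \<in> {1..n}")
    case True
    then have "v i = -1 \<or> v i = 1" using that unfolding Vset_def by blast
    then show ?thesis by auto
  next
    case False
    then have "v i = 0" using that unfolding Vset_def by blast
    then show ?thesis by simp
  qed
  ultimately have "(\<Sum>v\<in>W. v i) \<le> ((\<Sum>v\<in>Vset n. v i) + card (Vset n)) / 2"
    using assms(2) by (intro sum_subset_le_half_sum_plus_card)
  then show ?thesis
    using assms(1) by (simp add: gV_def card_Vset)
qed

lemma sum_sign_vec_containing_1:
  fixes F :: "nat set \<Rightarrow> real"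
  assumes "0 < n"
    and odd: "\<And>A. A \<subseteq> {1..n} \<Longrightarrow> F ({1..n} - A) = - F A"
    and moment: "\<And>i. i \<in> {1..n} \<Longrightarrow> (\<Sum>A\<in>Pow {1..n}. F A * sign_vec n A i) = 2 * b"
  shows "(\<Sum>A\<in>{A. A \<subseteq> {1..n} \<and> 1 \<in> A}. F A * sign_vec n A i) = b * ones n i"
proof (cases "i \<in> {1..n}")
  case False
  then have "sign_vec n A i = 0" for A by (simp add: sign_vec_def)
  with False show ?thesis by (auto simp: ones_def)
next
  case i: True
  define V1 where "V1 = {A. A \<subseteq> {1..n} \<and> 1 \<in> A}"
  let ?f = "\<lambda>A. F A * sign_vec n A i"
  have "finite V1" unfolding V1_def by (rule finite_subset[of _ "Pow {1..n}"]) auto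
  have "Pow {1..n} = V1 \<union> (\<lambda>A. {1..n} - A) ` V1"
    using \<open>0 < n\<close> by (auto simp: V1_def image_iff intro!: exI[of _ "{1..n} - _"])
  then have "2 * b = (\<Sum>A\<in>V1. ?f A) + (\<Sum>A\<in>(\<lambda>A. {1..n} - A) ` V1. ?f A)"
    unfolding moment[OF i, symmetric]
    by (simp only:) (rule sum.union_disjoint, use \<open>finite V1\<close> in \<open>auto simp: V1_def\<close>)
  also have "(\<Sum>A\<in>(\<lambda>A. {1..n} - A) ` V1. ?f A) = (\<Sum>A\<in>V1. ?f A)"
  proof (rule sum.reindex_cong[OF _ refl])
    show "inj_on (\<lambda>A. {1..n} - A) V1" by (auto simp: V1_def inj_on_def)
    show "?f ({1..n} - A) = ?f A" if "A \<in> V1" for A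
      using odd[of A] sign_vec_Diff[OF i] that by (simp add: V1_def)
  qed
  finally show ?thesis using i by (simp add: ones_def V1_def)
qed

lemma exists_Vset_subset_sum:
  fixes F :: "nat set \<Rightarrow> real"
  assumes "0 < n"
    and sign: "\<And>A. A \<subseteq> {1..n} \<Longrightarrow> F A = 1 \<or> F A = -1"
    and odd: "\<And>A. A \<subseteq> {1..n} \<Longrightarrow> F ({1..n} - A) = - F A"
    and moment: "\<And>i. i \<in> {1..n} \<Longrightarrow> (\<Sum>A\<in>Pow {1..n}. F A * sign_vec n A i) = 2 * b"
  shows "\<exists>W \<subseteq> Vset n. \<forall>i. (\<Sum>v\<in>W. v i) = gV n i + b / 2 * ones n i"
proof -
  define V1 where "V1 = {A. A \<subseteq> {1..n} \<and> 1 \<in> A}"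
  define W where "W = sign_vec n ` {A \<in> V1. F A = 1}"
  have fin: "finite V1" unfolding V1_def by (rule finite_subset[of _ "Pow {1..n}"]) auto
  have inj: "inj_on (sign_vec n) V1"
    by (rule inj_on_subset[OF inj_on_sign_vec]) (auto simp: V1_def)
  have "(\<Sum>v\<in>W. v i) = gV n i + b / 2 * ones n i" for i
  proof -
    have "(\<Sum>v\<in>W. v i) = (\<Sum>A\<in>{A \<in> V1. F A = 1}. sign_vec n A i)"
      unfolding W_def by (rule sum.reindex_cong[OF inj_on_subset[OF inj]]) auto
    also have "\<dots> = (\<Sum>A\<in>V1. if F A = 1 then sign_vec n A i else 0)"
      by (rule sum.inter_filter[OF fin])
    also have "\<dots> = (\<Sum>A\<in>V1. (1 + F A) / 2 * sign_vec n A i)"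
    proof (rule sum.cong)
      fix A assume "A \<in> V1"
      then have "F A = 1 \<or> F A = -1" using sign by (simp add: V1_def)
      then show "(if F A = 1 then sign_vec n A i else 0) = (1 + F A) / 2 * sign_vec n A i" by auto
    qed simp
    also have "\<dots> = (\<Sum>A\<in>V1. sign_vec n A i) / 2 + (\<Sum>A\<in>V1. F A * sign_vec n A i) / 2"
      by (simp add: sum.distrib algebra_simps flip: sum_divide_distrib)
    also have "(\<Sum>A\<in>V1. sign_vec n A i) = 2 * gV n i"
      unfolding gV_def Vset_eq_image_sign_vec[OF \<open>0 < n\<close>] V1_def[symmetric]
      by (simp add: sum.reindex[OF inj])
    also have "(\<Sum>A\<in>V1. F A * sign_vec n A i) = b * ones n i"
      unfolding V1_def using assms(1) odd moment by (rule sum_sign_vec_containing_1)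
    finally show ?thesis by simp
  qed
  moreover have "W \<subseteq> Vset n"
    using \<open>0 < n\<close> by (auto simp: W_def V1_def Vset_eq_image_sign_vec)
  ultimately show ?thesis by blast
qed

section \<open>Leading signs of cyclic rotations\<close>

definition lead_sign :: "(nat \<Rightarrow> int) \<Rightarrow> int" where
  "lead_sign q = sgn (q (LEAST j. q j \<noteq> 0))"

definition cyclic_sign_sum :: "nat \<Rightarrow> (nat \<Rightarrow> int) \<Rightarrow> int" where
  "cyclic_sign_sum m q = (\<Sum>s<m. lead_sign (\<lambda>j. q (j + s)))"

lemma lead_sign_uminus: "lead_sign (\<lambda>j. - q j) = - lead_sign q"
  by (simp add: lead_sign_def sgn_minus)

lemma abs_lead_sign: "q j \<noteq> 0 \<Longrightarrow> \<bar>lead_sign q\<bar> = 1"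
  unfolding lead_sign_def by (metis (mono_tags) LeastI abs_sgn_eq_1)

lemma cyclic_sign_sum_uminus: "cyclic_sign_sum m (\<lambda>j. - q j) = - cyclic_sign_sum m q"
  by (simp add: cyclic_sign_sum_def lead_sign_uminus sum_negf)

lemma periodic_add_mult:
  fixes q :: "nat \<Rightarrow> 'a" and m :: nat
  assumes "\<And>j. q (j + m) = q j"
  shows "q (j + m * k) = q j"
proof (induction k)
  case (Suc k)
  have "j + m * Suc k = (j + m * k) + m" by simp
  then show ?case by (simp only: assms Suc.IH)
qed simp

lemma cyclic_sign_sum_shift:
  assumes "\<And>j. q (j + m) = q j"
  shows "cyclic_sign_sum m (\<lambda>j. q (Suc j)) = cyclic_sign_sum m q"
proof -
  let ?f = "\<lambda>s. lead_sign (\<lambda>j. q (j + s))"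
  have "cyclic_sign_sum m (\<lambda>j. q (Suc j)) + ?f 0 = (\<Sum>s<Suc m. ?f s)"
    by (simp add: cyclic_sign_sum_def sum.lessThan_Suc_shift del: sum.lessThan_Suc)
  also have "\<dots> = cyclic_sign_sum m q + ?f m"
    by (simp add: cyclic_sign_sum_def)
  also have "(\<lambda>j. q (j + m)) = q" using assms by simp
  finally show ?thesis by simp
qed

lemma odd_cyclic_sign_sum:
  assumes "odd m" and periodic: "\<And>j. q (j + m) = q j" and "q k \<noteq> 0"
  shows "odd (cyclic_sign_sum m q)"
proof -
  have "odd (lead_sign (\<lambda>j. q (j + s)))" for s
  proof -
    have "k + (m - 1) * s + s = k + m * s"
      using odd_pos[OF \<open>odd m\<close>] by (cases m) auto
    then have "q (k + (m - 1) * s + s) = q k"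
      using periodic_add_mult[of q m, OF periodic, of k s] by (simp only:)
    then have "\<bar>lead_sign (\<lambda>j. q (j + s))\<bar> = 1"
      using \<open>q k \<noteq> 0\<close> by (intro abs_lead_sign[of _ "k + (m - 1) * s"]) simp
    then show ?thesis by (auto simp: abs_if split: if_splits)
  qed
  then show ?thesis
    using \<open>odd m\<close> by (simp add: cyclic_sign_sum_def even_sum_iff)
qed

section \<open>The cyclic shift of coordinates\<close>

definition cyclic_succ :: "nat \<Rightarrow> nat \<Rightarrow> nat" where
  "cyclic_succ n x = x mod n + 1"

lemma cyclic_succ_eq: "x \<in> {1..n} \<Longrightarrow> cyclic_succ n x = (if x = n then 1 else Suc x)"
  by (simp add: cyclic_succ_def)

lemma bij_betw_cyclic_succ: "bij_betw (cyclic_succ n) {1..n} {1..n}"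
  by (rule bij_betw_byWitness[where f' = "\<lambda>y. if y = 1 then n else y - 1"])
     (auto simp: cyclic_succ_def mod_if)

lemma cyclic_succ_mod: "m dvd n \<Longrightarrow> cyclic_succ n x mod m = Suc x mod m"
  unfolding cyclic_succ_def by (metis Suc_eq_plus1 mod_Suc_eq mod_mod_cancel)

lemma cyclic_succ_invariant_imp_const:
  assumes "\<And>k. k \<in> {1..n} \<Longrightarrow> f (cyclic_succ n k) = f k" and "k \<in> {1..n}"
  shows "f k = f 1"
  using assms(2)
proof (induction k)
  case (Suc k)
  then show ?case
    using assms(1)[of k] by (cases "k = 0") (auto simp: cyclic_succ_eq split: if_splits)
qed simp

section \<open>An odd sign function with vanishing moments on the middle layer\<close>

definition middle_layer :: "nat \<Rightarrow> nat set set" where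
  "middle_layer n = {A. A \<subseteq> {1..n} \<and> 2 * card A = n}"

lemma finite_middle_layer: "finite (middle_layer n)"
  by (rule finite_subset[of _ "Pow {1..n}"]) (auto simp: middle_layer_def)

locale odd_divisor =
  fixes n m :: nat
  assumes n_pos: "0 < n" and odd_m: "odd m" and m_gt_1: "1 < m" and m_dvd_n: "m dvd n"
begin

lemma m_le_n: "m \<le> n"
  using m_dvd_n n_pos by (simp add: dvd_imp_le)

definition block :: "nat \<Rightarrow> nat set" where
  "block j = {x \<in> {1..n}. x mod m = j mod m}"

definition imbalance :: "nat set \<Rightarrow> nat \<Rightarrow> int" where
  "imbalance A j = int (card (A \<inter> block j)) - int (card (block j - A))"

definition mid_sign :: "nat set \<Rightarrow> real" where
  "mid_sign A = (if \<forall>j. imbalance A j = 0 then (\<Prod>x\<in>{1..m}. sign_vec n A x)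
                 else of_int (sgn (cyclic_sign_sum m (imbalance A))))"

lemma block_subset: "block j \<subseteq> {1..n}"
  by (auto simp: block_def)

lemma imbalance_add_m: "imbalance A (j + m) = imbalance A j"
  by (simp add: imbalance_def block_def)

lemma imbalance_Diff: "imbalance ({1..n} - A) j = - imbalance A j"
proof -
  have "({1..n} - A) \<inter> block j = block j - A" "block j - ({1..n} - A) = A \<inter> block j"
    using block_subset by auto
  then show ?thesis by (simp add: imbalance_def)
qed

lemma prod_sign_vec_cases: "(\<Prod>x\<in>{1..m}. sign_vec n A x) = 1 \<or> (\<Prod>x\<in>{1..m}. sign_vec n A x) = -1"
proof -
  have "\<bar>\<Prod>x\<in>{1..m}. sign_vec n A x\<bar> = 1"
    using m_le_n by (simp add: abs_prod abs_sign_vec)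
  then show ?thesis by linarith
qed

lemma mid_sign_cases: "mid_sign A = 1 \<or> mid_sign A = -1"
proof (cases "\<forall>j. imbalance A j = 0")
  case False
  then obtain k where "imbalance A k \<noteq> 0" by blast
  then have "odd (cyclic_sign_sum m (imbalance A))"
    using odd_m by (intro odd_cyclic_sign_sum) (auto simp: imbalance_add_m)
  then have "cyclic_sign_sum m (imbalance A) \<noteq> 0" by auto
  with False show ?thesis by (auto simp: mid_sign_def sgn_if)
qed (use prod_sign_vec_cases in \<open>simp add: mid_sign_def\<close>)

lemma mid_sign_Diff: "mid_sign ({1..n} - A) = - mid_sign A"
proof -
  have imb: "imbalance ({1..n} - A) = (\<lambda>j. - imbalance A j)"
    by (rule ext) (rule imbalance_Diff)
  have "(\<Prod>x\<in>{1..m}. sign_vec n ({1..n} - A) x) = (\<Prod>x\<in>{1..m}. - sign_vec n A x)"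
    using m_le_n by (intro prod.cong refl sign_vec_Diff) auto
  also have "\<dots> = - (\<Prod>x\<in>{1..m}. sign_vec n A x)"
    using odd_m by (simp add: prod_uminus)
  finally show ?thesis
    unfolding mid_sign_def imb by (simp add: cyclic_sign_sum_uminus sgn_minus)
qed

definition flip_block :: "nat \<Rightarrow> nat set \<Rightarrow> nat set" where
  "flip_block j A = (A - block j) \<union> (block j - A)"

lemma flip_block_flip_block: "flip_block j (flip_block j A) = A"
  by (auto simp: flip_block_def)

lemma block_Int_initial: "block j \<inter> {1..m} = {if j mod m = 0 then m else j mod m}"
proof -
  have "x mod m = (if x = m then 0 else x)" if "x \<in> {1..m}" for x
    using that by auto
  moreover have "j mod m < m"
    using m_gt_1 by simp
  ultimately show ?thesis
    using m_le_n by (auto simp: block_def split: if_splits)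
qed

lemma notin_block_Suc: "i \<notin> block (Suc i)"
  using m_gt_1 by (auto simp: block_def mod_Suc)

lemma sign_vec_flip_block:
  "sign_vec n (flip_block j A) x = (if x \<in> block j then - sign_vec n A x else sign_vec n A x)"
  using block_subset by (auto simp: sign_vec_def flip_block_def)

lemma imbalance_flip_block:
  "imbalance (flip_block j A) k = (if k mod m = j mod m then - imbalance A k else imbalance A k)"
proof (cases "k mod m = j mod m")
  case True
  then have "block k = block j" by (simp add: block_def)
  then have "flip_block j A \<inter> block k = block k - A" "block k - flip_block j A = A \<inter> block k"
    by (auto simp: flip_block_def)
  with True show ?thesis by (simp add: imbalance_def)
next
  case False
  then have "block k \<inter> block j = {}" by (auto simp: block_def)
  then have "flip_block j A \<inter> block k = A \<inter> block k" "block k - flip_block j A = block k - A"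
    by (auto simp: flip_block_def)
  with False show ?thesis by (simp add: imbalance_def)
qed

lemma card_flip_block:
  assumes "A \<subseteq> {1..n}" and "imbalance A j = 0"
  shows "card (flip_block j A) = card A"
proof -
  have fin: "finite A" "finite (block j)"
    using assms(1) block_subset finite_subset by blast+
  have "card (flip_block j A) = card (A - block j) + card (block j - A)"
    unfolding flip_block_def using fin by (intro card_Un_disjoint) auto
  also have "card (block j - A) = card (A \<inter> block j)"
    using assms(2) by (simp add: imbalance_def)
  also have "card (A - block j) + card (A \<inter> block j) = card A"
    using fin by (metis Int_commute add.commute card_Int_Diff)
  finally show ?thesis .
qed

lemma prod_sign_vec_flip_block:
  "(\<Prod>x\<in>{1..m}. sign_vec n (flip_block j A) x) = - (\<Prod>x\<in>{1..m}. sign_vec n A x)"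
proof -
  define r where "r = (if j mod m = 0 then m else j mod m)"
  have r: "r \<in> {1..m}" "r \<in> block j" and only_r: "x \<in> {1..m} \<Longrightarrow> x \<in> block j \<Longrightarrow> x = r" for x
    using block_Int_initial[of j] unfolding r_def by blast+
  have "(\<Prod>x\<in>{1..m} - {r}. sign_vec n (flip_block j A) x) = (\<Prod>x\<in>{1..m} - {r}. sign_vec n A x)"
    using only_r by (intro prod.cong) (auto simp: sign_vec_flip_block)
  moreover have "sign_vec n (flip_block j A) r = - sign_vec n A r"
    using r by (simp add: sign_vec_flip_block)
  ultimately show ?thesis
    using r(1) by (simp add: prod.remove)
qed

lemma sum_balanced_middle_layer:
  assumes "i \<in> {1..n}"
  shows "(\<Sum>A\<in>{A \<in> middle_layer n. \<forall>j. imbalance A j = 0}. mid_sign A * sign_vec n A i) = 0"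
proof (rule sum_involution_eq_0[where h = "flip_block (Suc i)"])
  fix A assume A: "A \<in> {A \<in> middle_layer n. \<forall>j. imbalance A j = 0}"
  then have sub: "A \<subseteq> {1..n}" by (simp add: middle_layer_def)
  have balanced: "\<forall>j. imbalance (flip_block (Suc i) A) j = 0"
    using A by (simp add: imbalance_flip_block)
  then show "flip_block (Suc i) A \<in> {A \<in> middle_layer n. \<forall>j. imbalance A j = 0}"
    using A sub block_subset card_flip_block[OF sub]
    by (auto simp: middle_layer_def flip_block_def)
  show "flip_block (Suc i) (flip_block (Suc i) A) = A"
    by (rule flip_block_flip_block)
  have "block (Suc i) \<noteq> {}"
    using block_Int_initial by blast
  then show "flip_block (Suc i) A \<noteq> A"
    by (auto simp: flip_block_def)
  have "mid_sign (flip_block (Suc i) A) = - mid_sign A"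
    using A balanced unfolding mid_sign_def prod_sign_vec_flip_block by simp
  moreover have "sign_vec n (flip_block (Suc i) A) i = sign_vec n A i"
    using notin_block_Suc by (simp add: sign_vec_flip_block)
  ultimately show "mid_sign (flip_block (Suc i) A) * sign_vec n (flip_block (Suc i) A) i
                   + mid_sign A * sign_vec n A i = 0"
    by simp
qed

lemma image_cyclic_succ_block: "cyclic_succ n ` block j = block (Suc j)"
proof
  show "cyclic_succ n ` block j \<subseteq> block (Suc j)"
  proof
    fix y assume "y \<in> cyclic_succ n ` block j"
    then obtain x where x: "x \<in> block j" "y = cyclic_succ n x" by blast
    then have "y \<in> {1..n}"
      using bij_betw_cyclic_succ[of n] block_subset unfolding bij_betw_def by blast
    moreover have "y mod m = Suc j mod m"
      using x m_dvd_n by (simp add: block_def cyclic_succ_mod) (metis mod_Suc_eq)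
    ultimately show "y \<in> block (Suc j)" by (simp add: block_def)
  qed
  show "block (Suc j) \<subseteq> cyclic_succ n ` block j"
  proof
    fix y assume y: "y \<in> block (Suc j)"
    then have "y \<in> {1..n}"
      using block_subset by blast
    then obtain x where x: "x \<in> {1..n}" "y = cyclic_succ n x"
      using bij_betw_cyclic_succ[of n] unfolding bij_betw_def by blast
    then have "Suc x mod m = Suc j mod m"
      using y m_dvd_n by (simp add: block_def cyclic_succ_mod)
    then have "x mod m = j mod m"
      by (metis Zero_not_Suc mod_Suc nat.inject)
    with x show "y \<in> cyclic_succ n ` block j"
      by (auto simp: block_def)
  qed
qed

lemma imbalance_image_cyclic_succ:
  assumes "A \<subseteq> {1..n}"
  shows "imbalance (cyclic_succ n ` A) (Suc j) = imbalance A j"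
proof -
  have inj: "inj_on (cyclic_succ n) {1..n}"
    using bij_betw_cyclic_succ by (rule bij_betw_imp_inj_on)
  have card_image: "card (cyclic_succ n ` B) = card B" if "B \<subseteq> {1..n}" for B
    using inj that by (meson card_image inj_on_subset)
  have "cyclic_succ n ` A \<inter> block (Suc j) = cyclic_succ n ` (A \<inter> block j)"
    unfolding image_cyclic_succ_block [symmetric]
    by (rule inj_on_image_Int[OF inj, symmetric]) (use assms block_subset in auto)
  moreover have "block (Suc j) - cyclic_succ n ` A = cyclic_succ n ` (block j - A)"
    unfolding image_cyclic_succ_block [symmetric]
    by (rule inj_on_image_set_diff[OF inj, symmetric]) (use assms block_subset in auto)
  moreover have "A \<inter> block j \<subseteq> {1..n}" "block j - A \<subseteq> {1..n}"
    using block_subset by auto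
  ultimately show ?thesis
    unfolding imbalance_def by (simp only: card_image)
qed

lemma sign_vec_image_cyclic_succ:
  assumes "A \<subseteq> {1..n}" and "k \<in> {1..n}"
  shows "sign_vec n (cyclic_succ n ` A) (cyclic_succ n k) = sign_vec n A k"
proof -
  have "cyclic_succ n k \<in> {1..n}"
    using assms(2) bij_betw_cyclic_succ[of n] unfolding bij_betw_def by blast
  moreover have "cyclic_succ n k \<in> cyclic_succ n ` A \<longleftrightarrow> k \<in> A"
    using bij_betw_imp_inj_on[OF bij_betw_cyclic_succ] assms(2,1) by (rule inj_on_image_mem_iff)
  ultimately show ?thesis
    using assms(2) by (simp add: sign_vec_def)
qed

lemma mid_sign_image_cyclic_succ:
  assumes "A \<subseteq> {1..n}" and "\<not> (\<forall>j. imbalance A j = 0)"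
  shows "\<not> (\<forall>j. imbalance (cyclic_succ n ` A) j = 0)"
    and "mid_sign (cyclic_succ n ` A) = mid_sign A"
proof -
  have imb: "imbalance A = (\<lambda>j. imbalance (cyclic_succ n ` A) (Suc j))"
    using imbalance_image_cyclic_succ[OF assms(1)] by simp
  with assms(2) show unbalanced: "\<not> (\<forall>j. imbalance (cyclic_succ n ` A) j = 0)"
    by auto
  have "cyclic_sign_sum m (imbalance A) = cyclic_sign_sum m (imbalance (cyclic_succ n ` A))"
    unfolding imb by (rule cyclic_sign_sum_shift) (rule imbalance_add_m)
  with assms(2) unbalanced show "mid_sign (cyclic_succ n ` A) = mid_sign A"
    by (auto simp: mid_sign_def)
qed

lemma bij_betw_image_cyclic_succ_unbalanced:
  "bij_betw (image (cyclic_succ n))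
     {A \<in> middle_layer n. \<not> (\<forall>j. imbalance A j = 0)} {A \<in> middle_layer n. \<not> (\<forall>j. imbalance A j = 0)}"
proof -
  define U where "U = {A \<in> middle_layer n. \<not> (\<forall>j. imbalance A j = 0)}"
  have U_sub: "A \<subseteq> {1..n}" if "A \<in> U" for A
    using that by (simp add: U_def middle_layer_def)
  have inj: "inj_on (cyclic_succ n) {1..n}"
    using bij_betw_cyclic_succ by (rule bij_betw_imp_inj_on)
  have inj_image: "inj_on (image (cyclic_succ n)) U"
    by (rule inj_on_subset[OF inj_on_image_Pow[OF inj]]) (use U_sub in blast)
  have "image (cyclic_succ n) ` U \<subseteq> U"
  proof
    fix B assume "B \<in> image (cyclic_succ n) ` U"
    then obtain A where A: "A \<in> U" "B = cyclic_succ n ` A" by blast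
    have "B \<subseteq> {1..n}"
      using A U_sub bij_betw_cyclic_succ[of n] unfolding bij_betw_def by blast
    moreover have "card B = card A"
      using A U_sub inj by (metis card_image inj_on_subset)
    ultimately show "B \<in> U"
      using A mid_sign_image_cyclic_succ(1)[OF U_sub] by (auto simp: U_def middle_layer_def)
  qed
  moreover have "finite U"
    by (rule finite_subset[OF _ finite_middle_layer[of n]]) (auto simp: U_def)
  ultimately have "image (cyclic_succ n) ` U = U"
    using inj_image by (intro endo_inj_surj)
  with inj_image show ?thesis
    unfolding U_def bij_betw_def by simp
qed

lemma sum_unbalanced_middle_layer:
  assumes "i \<in> {1..n}"
  shows "(\<Sum>A\<in>{A \<in> middle_layer n. \<not> (\<forall>j. imbalance A j = 0)}. mid_sign A * sign_vec n A i) = 0"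
proof -
  define U where "U = {A \<in> middle_layer n. \<not> (\<forall>j. imbalance A j = 0)}"
  define S where "S k = (\<Sum>A\<in>U. mid_sign A * sign_vec n A k)" for k
  have U_sub: "A \<subseteq> {1..n}" if "A \<in> U" for A
    using that by (simp add: U_def middle_layer_def)
  have invariant: "S (cyclic_succ n k) = S k" if k: "k \<in> {1..n}" for k
  proof -
    have "S k = (\<Sum>A\<in>U. mid_sign (cyclic_succ n ` A) * sign_vec n (cyclic_succ n ` A) (cyclic_succ n k))"
      unfolding S_def using k U_sub
      by (intro sum.cong) (auto simp: U_def mid_sign_image_cyclic_succ sign_vec_image_cyclic_succ)
    also have "\<dots> = S (cyclic_succ n k)"
      unfolding S_def U_def by (rule sum.reindex_bij_betw[OF bij_betw_image_cyclic_succ_unbalanced])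
    finally show ?thesis by (rule sym)
  qed
  have const: "S k = S 1" if "k \<in> {1..n}" for k
    using invariant that by (rule cyclic_succ_invariant_imp_const)
  have "real n * S 1 = (\<Sum>k\<in>{1..n}. S 1)"
    by simp
  also have "\<dots> = (\<Sum>k\<in>{1..n}. S k)"
    by (rule sum.cong[OF refl const[symmetric]])
  also have "\<dots> = (\<Sum>A\<in>U. mid_sign A * (\<Sum>k\<in>{1..n}. sign_vec n A k))"
    unfolding S_def by (simp add: sum.swap[of _ U] sum_distrib_left)
  also have "\<dots> = 0"
  proof (intro sum.neutral ballI)
    fix A assume A: "A \<in> U"
    then have "real n = 2 * real (card A)"
      by (simp add: U_def middle_layer_def flip: of_nat_mult)
    then show "mid_sign A * (\<Sum>k\<in>{1..n}. sign_vec n A k) = 0"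
      unfolding sum_sign_vec_atLeastAtMost[OF U_sub[OF A]] by simp
  qed
  finally have "S 1 = 0"
    using n_pos by simp
  with const[OF assms] show ?thesis
    by (simp add: S_def U_def)
qed

lemma sum_middle_layer:
  assumes "i \<in> {1..n}"
  shows "(\<Sum>A\<in>middle_layer n. mid_sign A * sign_vec n A i) = 0"
proof -
  let ?f = "\<lambda>A. mid_sign A * sign_vec n A i" and ?B = "{A. \<forall>j. imbalance A j = 0}"
  have "(\<Sum>A\<in>middle_layer n. ?f A) = (\<Sum>A\<in>middle_layer n \<inter> ?B. ?f A) + (\<Sum>A\<in>middle_layer n - ?B. ?f A)"
    by (rule sum.Int_Diff[OF finite_middle_layer])
  also have "middle_layer n \<inter> ?B = {A \<in> middle_layer n. \<forall>j. imbalance A j = 0}" by blast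
  also have "middle_layer n - ?B = {A \<in> middle_layer n. \<not> (\<forall>j. imbalance A j = 0)}" by blast
  finally show ?thesis
    using sum_balanced_middle_layer[OF assms] sum_unbalanced_middle_layer[OF assms] by simp
qed

definition majority_sign :: "nat set \<Rightarrow> real" where
  "majority_sign A = (if n < 2 * card A then 1 else if 2 * card A < n then -1 else mid_sign A)"

lemma majority_sign_cases: "majority_sign A = 1 \<or> majority_sign A = -1"
  unfolding majority_sign_def using mid_sign_cases[of A]
  by (cases "n < 2 * card A"; cases "2 * card A < n") simp_all

lemma majority_sign_Diff:
  assumes "A \<subseteq> {1..n}"
  shows "majority_sign ({1..n} - A) = - majority_sign A"
proof -
  have "n < 2 * (n - card A) \<longleftrightarrow> 2 * card A < n" "2 * (n - card A) < n \<longleftrightarrow> n < 2 * card A"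
    using card_le_of_subset_atLeastAtMost[OF assms] by arith+
  then show ?thesis
    unfolding majority_sign_def card_Diff_atLeastAtMost[OF assms] mid_sign_Diff by auto
qed

lemma sum_majority_sign:
  assumes "i \<in> {1..n}"
  shows "(\<Sum>A\<in>Pow {1..n}. majority_sign A * sign_vec n A i) = 2 * real ((n - 1) choose (n div 2))"
proof -
  let ?f = "\<lambda>A. majority_sign A * sign_vec n A i"
  define G where "G = {A. A \<subseteq> {1..n} \<and> n < 2 * card A}"
  define L where "L = {A. A \<subseteq> {1..n} \<and> 2 * card A < n}"
  have "finite G" "finite L"
    unfolding G_def L_def by (rule finite_subset[of _ "Pow {1..n}"]; auto)+
  note fin = this finite_middle_layer
  have disj: "G \<inter> L = {}" "(G \<union> L) \<inter> middle_layer n = {}"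
    by (auto simp: G_def L_def middle_layer_def)
  have "Pow {1..n} = G \<union> L \<union> middle_layer n"
    by (auto simp: G_def L_def middle_layer_def)
  then have "(\<Sum>A\<in>Pow {1..n}. ?f A) = (\<Sum>A\<in>G \<union> L. ?f A) + (\<Sum>A\<in>middle_layer n. ?f A)"
    using fin disj by (simp add: sum.union_disjoint)
  also have "(\<Sum>A\<in>G \<union> L. ?f A) = (\<Sum>A\<in>G. ?f A) + (\<Sum>A\<in>L. ?f A)"
    using fin disj by (simp add: sum.union_disjoint)
  also have "(\<Sum>A\<in>L. ?f A) = (\<Sum>A\<in>G. ?f A)"
  proof (rule sum.reindex_cong)
    show "inj_on (\<lambda>A. {1..n} - A) G" by (auto simp: G_def inj_on_def)
    show "L = (\<lambda>A. {1..n} - A) ` G"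
      unfolding G_def L_def by (rule lower_half_eq_image_Diff)
    show "?f ({1..n} - A) = ?f A" if "A \<in> G" for A
      using that majority_sign_Diff[of A] sign_vec_Diff[OF assms, of A] by (simp add: G_def)
  qed
  also have "(\<Sum>A\<in>G. ?f A) = real ((n - 1) choose (n div 2))"
  proof -
    have "(\<Sum>A\<in>G. ?f A) = (\<Sum>A\<in>G. sign_vec n A i)"
      by (intro sum.cong) (auto simp: G_def majority_sign_def)
    moreover have "G = {A. A \<subseteq> {1..n} \<and> n div 2 < card A}"
      by (auto simp: G_def)
    ultimately show ?thesis
      using sum_sign_vec_card_gt[OF assms] by simp
  qed
  also have "(\<Sum>A\<in>middle_layer n. ?f A) = (\<Sum>A\<in>middle_layer n. mid_sign A * sign_vec n A i)"
    by (intro sum.cong) (auto simp: middle_layer_def majority_sign_def)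
  also have "\<dots> = 0"
    by (rule sum_middle_layer[OF assms])
  finally show ?thesis by simp
qed

end

lemma PV_shift_subset_KM:
  assumes "2 \<le> n"
  shows "{(\<lambda>i. p i - gV n i - c * ones n i) | p. p \<in> PV n} \<subseteq> KM n (2 ^ (n - 2) - c)"
proof
  fix x assume "x \<in> {(\<lambda>i. p i - gV n i - c * ones n i) | p. p \<in> PV n}"
  then obtain W where W: "W \<subseteq> Vset n" and x: "x = (\<lambda>i. (\<Sum>v\<in>W. v i) - gV n i - c * ones n i)"
    unfolding PV_def by blast
  have "2 ^ (n - 1) / 2 = (2 ^ (n - 2) :: real)"
    using assms by (simp add: power_diff)
  moreover have "(\<Sum>v\<in>W. v i) \<le> gV n i + 2 ^ (n - 1) / 2" for i
    using assms by (intro sum_Vset_subset_le[OF _ W]) simp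
  ultimately show "x \<in> KM n (2 ^ (n - 2) - c)"
    unfolding KM_def x ones_def by (simp add: diff_le_eq add.commute)
qed

theorem lemma4p4:
  fixes n :: nat
  assumes "even n" and "n > 0" and "\<not> (\<exists>k. n = 2 ^ k)"
  defines "c \<equiv> (1/2) * real ((n - 1) choose (n div 2))"
  defines "M \<equiv> 2 ^ (n - 2) - c"
  defines "S \<equiv> {(\<lambda>i. p i - gV n i - c * ones n i) | p. p \<in> PV n}"
  shows "(\<lambda>i. 0) \<in> S \<and> S \<subseteq> KM n M"
proof
  obtain m where "odd m" "1 < m" "m dvd n"
    using exists_odd_divisor_if_not_power_of_2 assms(2,3) by blast
  with \<open>n > 0\<close> interpret odd_divisor n m
    by unfold_locales
  obtain W where "W \<subseteq> Vset n" and W: "\<And>i. (\<Sum>v\<in>W. v i) = gV n i + c * ones n i"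
    using exists_Vset_subset_sum[OF \<open>n > 0\<close> majority_sign_cases majority_sign_Diff sum_majority_sign]
    by (auto simp: c_def)
  have "(\<lambda>i. \<Sum>v\<in>W. v i) \<in> PV n"
    using \<open>W \<subseteq> Vset n\<close> unfolding PV_def by blast
  then show "(\<lambda>i. 0) \<in> S"
    unfolding S_def by (force simp: W)
next
  have "2 \<le> n"
    using assms(1,2) by presburger
  then show "S \<subseteq> KM n M"
    unfolding S_def M_def by (rule PV_shift_subset_KM)
qed

end
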